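(* Let $n$ be even. The map $\mathrm{Sm}(v_0,\dots,v_n)=2^{-(n+1)}\sum_{\sigma_0,\dots,\sigma_n\in\{\pm1\}}S(\sigma_0v_0,\dots,\sigma_nv_n)$ descends to a map $(\mathbb{P}(\mathbb{R}^n))^{n+1}\to\mathbb{R}_\varepsilon$ which is $\mathrm{GL}_n(\mathbb{R})$-equivariant (i.e. $\mathrm{Sm}(gv_0,\dots,gv_n)=\operatorname{sign}(\det g)\mathrm{Sm}(v_0,\dots,v_n)$), and its coboundary $d\,\mathrm{Sm}$ vanishes on all hereditarily spanning $(n+2)$-tuples.
   Context: $\mathrm{Or}(v_1,\dots,v_n)=\operatorname{sign}\det(v_1,\dots,v_n)$ (zero if not a basis). $S:(\mathbb{R}^n)^{n+1}\to\{-1,0,1\}$ is defined by $S(v_0,\dots,v_n)=0$ if $0$ is not in the interior of the convex hull of $v_0,\dots,v_n$, and otherwise $S(v_0,\dots,v_n)=(-1)^i\mathrm{Or}(v_0,\dots,\widehat{v_i},\dots,v_n)$ for any $i$ (independent of $i$). $\mathbb{R}_\varepsilon$ is $\mathbb{R}$ with $g$ acting by $\operatorname{sign}\det g$. A tuple is hereditarily spanning if any $n$ of its entries span $\mathbb{R}^n$. $d$ is the alternating sum of omissions of variables. *)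

theory Defs
  imports "HOL-Analysis.Analysis"
begin

text \<open>Vectors of R^n are elements of real^'n, with n = CARD('n). The coordinate
  index type 'n carries a linear order, used to identify it with {0..n-1}
  (position of a coordinate j is the number of coordinates smaller than j).\<close>

definition coord_pos :: "'n::{finite,linorder} \<Rightarrow> nat" where
  "coord_pos j = card {k. k < j}"

definition Or :: "(nat \<Rightarrow> real^'n::{finite,linorder}) \<Rightarrow> real" where
  "Or w = sgn (det (\<chi> i j. w (coord_pos j) $ i))"

text \<open>S(v_0,...,v_n): zero unless 0 is in the interior of the convex hull,
  otherwise (-1)^i Or(v_0,..,omit v_i,..,v_n), here taken with i = 0.\<close>
definition S :: "(nat \<Rightarrow> real^'n::{finite,linorder}) \<Rightarrow> real" where
  "S v = (if 0 \<in> interior (convex hull (v ` {..CARD('n)}))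
          then Or (\<lambda>k. v (Suc k)) else 0)"

definition Sm :: "(nat \<Rightarrow> real^'n::{finite,linorder}) \<Rightarrow> real" where
  "Sm v = (1 / 2 ^ (CARD('n) + 1)) *
     (\<Sum>\<sigma> \<in> Pi\<^sub>E {..CARD('n)} (\<lambda>_. {-1::real, 1}). S (\<lambda>i. \<sigma> i *\<^sub>R v i))"

definition omit :: "nat \<Rightarrow> (nat \<Rightarrow> 'a) \<Rightarrow> nat \<Rightarrow> 'a" where
  "omit i w k = (if k < i then w k else w (Suc k))"

definition cobdry :: "((nat \<Rightarrow> real^'n::{finite,linorder}) \<Rightarrow> real) \<Rightarrow> (nat \<Rightarrow> real^'n::{finite,linorder}) \<Rightarrow> real" where
  "cobdry f w = (\<Sum>i\<le>CARD('n) + 1. (-1) ^ i * f (omit i w))"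

definition hered_spanning :: "(nat \<Rightarrow> real^'n::{finite,linorder}) \<Rightarrow> bool" where
  "hered_spanning w \<longleftrightarrow>
     (\<forall>I \<subseteq> {..CARD('n) + 1}. card I = CARD('n) \<longrightarrow> span (w ` I) = UNIV)"

end

theory Submission imports Defs begin

(*
  Write n = CARD('n).  For an (n+1)-tuple u let
  cofactor i u = (-1)^i det(u_0, .., u_{i-1}, u_{i+1}, .., u_n) be its signed maximal minors.

  The cofactors satisfy the Cramer relation
      sum_i cofactor i u *R u_i = 0, and the coefficients of any linear relation among the
      u_i are proportional to them.  Hence 0 lies in the interior of the convex hull of
      u_0, .., u_n iff all cofactors are nonzero of one sign, and S u is then that sign.
  (2) Closed formula (sections 6-7).  Rescaling u_j by c_j multiplies cofactor i by all
      c_j with j <> i.  For even n exactly two of the 2^(n+1) sign flips make the cofactors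
      agree in sign, each contributing prod_i sgn (cofactor i u); therefore
      Sm u = (prod_i sgn (cofactor i u)) / 2^n.  Invariance under rescaling and
      GL_n-equivariance are immediate from this formula.
  (3) Cocycle (sections 8-10).  For an (n+2)-tuple w whose last n entries form a basis,
      every maximal minor of w is a 2x2 determinant of planar "Gale" points z_0, .., z_{n+1}
      (built from the coordinates of w_0, w_1 in that basis) times the basis determinant.
      So d Sm w is a multiple of sum_i prod_{j <> i} sgn det(z_i, z_j), which vanishes for
      an even number of pairwise independent points in the plane by a counting argument.
*)

lemma coord_pos_less: "coord_pos (j::'n::{finite,linorder}) < CARD('n)"
  unfolding coord_pos_def by (rule psubset_card_mono) auto

lemma strict_mono_coord_pos: "strict_mono (coord_pos :: 'n::{finite,linorder} \<Rightarrow> nat)"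
  unfolding strict_mono_def coord_pos_def by (intro allI impI psubset_card_mono) auto

lemma bij_coord_pos: "bij_betw (coord_pos :: 'n::{finite,linorder} \<Rightarrow> nat) UNIV {..<CARD('n)}"
proof -
  have inj: "inj (coord_pos :: 'n \<Rightarrow> nat)"
    using strict_mono_coord_pos by (rule strict_mono_imp_inj_on)
  have "range (coord_pos :: 'n \<Rightarrow> nat) \<subseteq> {..<CARD('n)}" using coord_pos_less by auto
  moreover have "card (range (coord_pos :: 'n \<Rightarrow> nat)) = CARD('n)"
    using inj card_image by blast
  ultimately have "range (coord_pos :: 'n \<Rightarrow> nat) = {..<CARD('n)}"
    by (metis card_lessThan card_subset_eq finite_lessThan)
  then show ?thesis using inj by (simp add: bij_betw_def)
qed

definition coord_of :: "nat \<Rightarrow> 'n::{finite,linorder}" where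
  "coord_of k = inv coord_pos k"

lemma coord_pos_coord_of: "k < CARD('n::{finite,linorder}) \<Longrightarrow> coord_pos (coord_of k :: 'n) = k"
  unfolding coord_of_def using bij_coord_pos
  by (metis bij_betw_imp_surj_on f_inv_into_f lessThan_iff)

lemma coord_of_coord_pos: "coord_of (coord_pos (j::'n::{finite,linorder})) = j"
  unfolding coord_of_def using bij_coord_pos by (metis bij_betw_imp_inj_on inv_f_f)

text \<open>coldet w is the determinant of the matrix with columns w_0, ..., w_{n-1};
  Or w is its sign.  Only the first n entries of w matter.\<close>
definition coldet :: "(nat \<Rightarrow> real^'n::{finite,linorder}) \<Rightarrow> real" where
  "coldet w = det (\<chi> i j. w (coord_pos j) $ i)"

lemma Or_eq_sgn_coldet: "Or w = sgn (coldet w)"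
  by (simp add: Or_def coldet_def)

lemma coldet_as_rows: "coldet (w::nat \<Rightarrow> real^'n::{finite,linorder}) = det (\<chi> j. w (coord_pos j))"
proof -
  have transp: "(\<chi> i j. w (coord_pos j) $ i) = transpose (\<chi> j. w (coord_pos j))"
    by (simp add: transpose_def vec_eq_iff)
  show ?thesis unfolding coldet_def transp det_transpose ..
qed

lemma coldet_upd_as_rows: "k < CARD('n) \<Longrightarrow>
   coldet ((w::nat \<Rightarrow> real^'n::{finite,linorder})(k := x)) =
   det (\<chi> j. if j = coord_of k then x else w (coord_pos j))"
  unfolding coldet_as_rows
  by (rule arg_cong[where f=det])
     (auto simp: vec_eq_iff coord_pos_coord_of coord_of_coord_pos dest: arg_cong[where f=coord_of])

lemma coldet_swap:
  assumes "a < CARD('n)" "b < CARD('n)" "a \<noteq> b"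
  shows "coldet ((w::nat \<Rightarrow> real^'n::{finite,linorder})(a := w b, b := w a)) = - coldet w"
proof -
  let ?t = "Transposition.transpose (coord_of a :: 'n) (coord_of b)"
  have ne: "coord_of a \<noteq> (coord_of b :: 'n)" using assms coord_pos_coord_of by metis
  have perm: "?t permutes UNIV" by (simp add: permutes_swap_id)
  have pos: "coord_pos (coord_of a :: 'n) = a" "coord_pos (coord_of b :: 'n) = b"
    using assms by (simp_all add: coord_pos_coord_of)
  have swapped: "(w(a := w b, b := w a)) (coord_pos j) = w (coord_pos (?t j))" for j
  proof -
    consider "j = coord_of a" | "j = coord_of b" | "j \<noteq> coord_of a" "j \<noteq> coord_of b" by blast
    then show ?thesis
    proof cases
      case 3
      then have "coord_pos j \<noteq> a" "coord_pos j \<noteq> b" using coord_of_coord_pos by metis+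
      with 3 show ?thesis by (simp add: transpose_def)
    qed (use pos ne assms in \<open>auto simp: transpose_def\<close>)
  qed
  have permuted: "(\<chi> i j. (w(a := w b, b := w a)) (coord_pos j) $ i) =
        (\<chi> i j. (\<chi> i j. w (coord_pos j) $ i) $ i $ ?t j)"
    by (simp only: swapped vec_lambda_beta)
  show ?thesis
    unfolding coldet_def permuted det_permute_columns[OF perm] using ne by (simp add: sign_swap_id)
qed

lemma coldet_repeated:
  assumes "a < CARD('n)" "b < CARD('n)" "a \<noteq> b" "w a = w b"
  shows "coldet (w::nat \<Rightarrow> real^'n::{finite,linorder}) = 0"
proof -
  have ne: "coord_of a \<noteq> (coord_of b :: 'n)" using assms coord_pos_coord_of by metis
  show ?thesis unfolding coldet_as_rows
    by (rule det_identical_rows[OF ne]) (simp add: row_def vec_eq_iff coord_pos_coord_of assms)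
qed

lemma coldet_add: "k < CARD('n) \<Longrightarrow>
   coldet ((w::nat \<Rightarrow> real^'n::{finite,linorder})(k := x + y)) = coldet (w(k := x)) + coldet (w(k := y))"
  unfolding coldet_upd_as_rows
  using det_row_add[of "coord_of k :: 'n" "\<lambda>_. x" "\<lambda>_. y" "\<lambda>j. w (coord_pos j)"] by simp

lemma coldet_scale: "k < CARD('n) \<Longrightarrow>
   coldet ((w::nat \<Rightarrow> real^'n::{finite,linorder})(k := c *\<^sub>R x)) = c * coldet (w(k := x))"
  unfolding coldet_upd_as_rows scalar_mult_eq_scaleR[symmetric] by (rule det_row_mul)

lemma coldet_sum:
  assumes "k < CARD('n)" "finite A"
  shows "coldet ((w::nat \<Rightarrow> real^'n::{finite,linorder})(k := (\<Sum>m\<in>A. f m))) =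
         (\<Sum>m\<in>A. coldet (w(k := f m)))"
  using assms(2)
proof (induction A rule: finite_induct)
  case empty
  show ?case using coldet_scale[OF assms(1), of w 0 0]
    by (simp only: sum.empty scale_zero_left mult_zero_left)
next
  case (insert a F)
  have "coldet (w(k := (\<Sum>m\<in>insert a F. f m))) = coldet (w(k := f a + (\<Sum>m\<in>F. f m)))"
    by (simp only: sum.insert[OF insert(1,2)])
  also have "\<dots> = coldet (w(k := f a)) + (\<Sum>m\<in>F. coldet (w(k := f m)))"
    by (simp only: coldet_add[OF assms(1)] insert.IH)
  also have "\<dots> = (\<Sum>m\<in>insert a F. coldet (w(k := f m)))"
    by (simp only: sum.insert[OF insert(1,2)])
  finally show ?case .
qed

lemma coldet_upd_same:
  assumes "j < CARD('n)" "m < CARD('n)"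
  shows "coldet ((B::nat \<Rightarrow> real^'n::{finite,linorder})(m := B j)) = (if j = m then coldet B else 0)"
  using assms by (auto intro: coldet_repeated[of m j])

text \<open>Replacing the m-th column by a combination of the columns only keeps its own
  coefficient: the determinant is multilinear and alternating.\<close>
lemma coldet_upd_combination:
  assumes "m < CARD('n)"
  shows "coldet ((B::nat \<Rightarrow> real^'n::{finite,linorder})(m := (\<Sum>l<CARD('n). c l *\<^sub>R B l))) =
         c m * coldet B"
proof -
  have "coldet (B(m := (\<Sum>l<CARD('n). c l *\<^sub>R B l))) =
        (\<Sum>l<CARD('n). c l * (if l = m then coldet B else 0))"
    using assms by (simp add: coldet_sum coldet_scale coldet_upd_same)
  also have "\<dots> = c m * coldet B" using assms by (simp add: if_distrib cong: if_cong)
  finally show ?thesis .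
qed

lemma coldet_scale_entries:
  "coldet (\<lambda>k. c k *\<^sub>R (w::nat \<Rightarrow> real^'n::{finite,linorder}) k) = (\<Prod>k<CARD('n). c k) * coldet w"
proof -
  have "coldet (\<lambda>k. c k *\<^sub>R w k) = det (\<chi> j. c (coord_pos j) *s w (coord_pos j))"
    unfolding coldet_as_rows by (simp add: scalar_mult_eq_scaleR)
  also have "\<dots> = (\<Prod>j\<in>UNIV. c (coord_pos (j::'n))) * coldet w"
    unfolding det_rows_mul coldet_as_rows ..
  also have "(\<Prod>j\<in>UNIV. c (coord_pos (j::'n))) = (\<Prod>k<CARD('n). c k)"
    by (rule prod.reindex_bij_betw[OF bij_coord_pos])
  finally show ?thesis .
qed

lemma coldet_matrix_mult:
  "coldet (\<lambda>k. g *v (w::nat \<Rightarrow> real^'n::{finite,linorder}) k) = det g * coldet w"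
proof -
  have "(\<chi> i j. (g *v w (coord_pos j)) $ i) = g ** ((\<chi> i j. w (coord_pos j) $ i)::((real,'n) vec,'n) vec)"
    by (simp add: vec_eq_iff matrix_matrix_mult_def matrix_vector_mult_def)
  then show ?thesis unfolding coldet_def by (simp add: det_mul)
qed

lemma coldet_nonzero_iff_span:
  "coldet (w::nat \<Rightarrow> real^'n::{finite,linorder}) \<noteq> 0 \<longleftrightarrow> span (w ` {..<CARD('n)}) = UNIV"
proof -
  have "rows (\<chi> j::'n. w (coord_pos j)) = w ` range (coord_pos :: 'n \<Rightarrow> nat)"
    unfolding rows_def row_def vec_lambda_eta by (auto simp: image_iff)
  also have "range (coord_pos :: 'n \<Rightarrow> nat) = {..<CARD('n)}"
    using bij_coord_pos by (rule bij_betw_imp_surj_on)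
  finally show ?thesis
    unfolding coldet_as_rows invertible_det_nz[symmetric] invertible_left_inverse
      matrix_left_invertible_span_rows by simp
qed

lemma coldet_cramer:
  assumes "coldet (w::nat \<Rightarrow> real^'n::{finite,linorder}) \<noteq> 0"
  shows "x = (\<Sum>k<CARD('n). (coldet (w(k := x)) / coldet w) *\<^sub>R w k)"
proof -
  let ?A = "\<chi> i j. w (coord_pos j) $ i"
  have d: "det ?A \<noteq> 0" using assms by (simp add: coldet_def)
  have minor: "det (\<chi> i j. if j = k then x $ i else ?A $ i $ j) = coldet (w(coord_pos k := x))" for k
    unfolding coldet_def
    by (rule arg_cong[where f=det])
       (auto simp: vec_eq_iff dest: strict_mono_coord_pos[THEN strict_mono_imp_inj_on, THEN injD])
  let ?y = "\<chi> k. det (\<chi> i j. if j = k then x $ i else ?A $ i $ j) / det ?A"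
  have "?A *v ?y = x" using cramer[OF d] by blast
  then have "x = ?A *v ?y" ..
  also have "\<dots> = (\<Sum>j\<in>UNIV. (coldet (w(coord_pos (j::'n) := x)) / coldet w) *\<^sub>R w (coord_pos j))"
    unfolding matrix_mult_sum minor
    by (simp add: scalar_mult_eq_scaleR column_def coldet_def[symmetric] vec_eq_iff)
  also have "\<dots> = (\<Sum>k<CARD('n). (coldet (w(k := x)) / coldet w) *\<^sub>R w k)"
    by (rule sum.reindex_bij_betw[OF bij_coord_pos])
  finally show ?thesis .
qed

definition skip :: "nat \<Rightarrow> nat \<Rightarrow> nat" where
  "skip i k = (if k < i then k else Suc k)"

lemma omit_skip: "omit i w k = w (skip i k)"
  by (simp add: omit_def skip_def)

lemma skip_image: "i \<le> n \<Longrightarrow> skip i ` {..<n} = {..n} - {i}"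
proof (intro equalityI subsetI)
  fix m assume "m \<in> {..n} - {i}" "i \<le> n"
  then show "m \<in> skip i ` {..<n}"
    by (cases "m < i") (auto simp: skip_def image_iff intro!: bexI[of _ "m - 1"])
next
  fix m assume "m \<in> skip i ` {..<n}" "i \<le> n"
  then show "m \<in> {..n} - {i}" by (auto simp: skip_def split: if_splits)
qed

lemma inj_skip: "inj (skip i)"
  by (auto simp: inj_def skip_def split: if_splits)

lemma bij_skip: "i \<le> n \<Longrightarrow> bij_betw (skip i) {..<n} ({..n} - {i})"
  unfolding bij_betw_def using inj_skip by (metis skip_image inj_on_subset subset_UNIV)

lemma omit_comm: "i \<le> k \<Longrightarrow> omit k (omit i w) = omit i (omit (Suc k) w)"
  by (auto simp: fun_eq_iff omit_def)

definition prepend :: "'a \<Rightarrow> (nat \<Rightarrow> 'a) \<Rightarrow> nat \<Rightarrow> 'a" where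
  "prepend x f k = (if k = 0 then x else f (k - 1))"

text \<open>Moving an entry from position k to the front costs k transpositions.\<close>
lemma coldet_prepend_omit:
  "k < CARD('n) \<Longrightarrow>
   coldet (prepend x (omit k (b::nat \<Rightarrow> real^'n::{finite,linorder}))) = (-1)^k * coldet (b(k := x))"
proof (induction k arbitrary: b)
  case 0
  have "prepend x (omit 0 b) = b(0 := x)" by (auto simp: fun_eq_iff prepend_def omit_def)
  then show ?case by simp
next
  case (Suc k)
  define b' where "b' = b(k := b (Suc k), Suc k := b k)"
  have "prepend x (omit (Suc k) b) = prepend x (omit k b')"
    by (auto simp: fun_eq_iff prepend_def omit_def b'_def)
  then have "coldet (prepend x (omit (Suc k) b)) = (-1)^k * coldet (b'(k := x))"
    using Suc by (simp add: fun_upd_def)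
  also have "b'(k := x) = (b(Suc k := x))(k := (b(Suc k := x)) (Suc k), Suc k := (b(Suc k := x)) k)"
    by (auto simp: fun_eq_iff b'_def)
  also have "coldet \<dots> = - coldet (b(Suc k := x))"
    using Suc by (intro coldet_swap) auto
  finally show ?case by (simp add: fun_upd_def)
qed

section \<open>Cofactors of an (n+1)-tuple\<close>

text \<open>The signed maximal minors of u_0, ..., u_n; they are the coefficients of the
  (up to scaling unique) linear relation among the u_i.\<close>
definition cofactor :: "nat \<Rightarrow> (nat \<Rightarrow> real^'n::{finite,linorder}) \<Rightarrow> real" where
  "cofactor i u = (-1)^i * coldet (omit i u)"

lemma cofactor_0: "cofactor 0 u = coldet (omit 0 u)"
  by (simp add: cofactor_def)

lemma cofactor_Suc:
  "m < CARD('n) \<Longrightarrow>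
   cofactor (Suc m) (u::nat \<Rightarrow> real^'n::{finite,linorder}) = - coldet ((omit 0 u)(m := u 0))"
proof -
  assume m: "m < CARD('n)"
  have "omit (Suc m) u = prepend (u 0) (omit m (omit 0 u))"
    by (auto simp: fun_eq_iff prepend_def omit_def)
  then show ?thesis unfolding cofactor_def using m by (simp add: coldet_prepend_omit)
qed

lemma cofactor_scale:
  "cofactor i (\<lambda>j. c j *\<^sub>R (u::nat \<Rightarrow> real^'n::{finite,linorder}) j) =
   (\<Prod>k<CARD('n). omit i c k) * cofactor i u"
proof -
  have "omit i (\<lambda>j. c j *\<^sub>R u j) = (\<lambda>k. omit i c k *\<^sub>R omit i u k)"
    by (auto simp: fun_eq_iff omit_def)
  then show ?thesis unfolding cofactor_def by (simp add: coldet_scale_entries)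
qed

lemma cofactor_matrix_mult:
  "cofactor i (\<lambda>j. g *v (v::nat \<Rightarrow> real^'n::{finite,linorder}) j) = det g * cofactor i v"
proof -
  have "omit i (\<lambda>j. g *v v j) = (\<lambda>k. g *v omit i v k)" by (auto simp: fun_eq_iff omit_def)
  then show ?thesis unfolding cofactor_def by (simp add: coldet_matrix_mult)
qed

text \<open>The cofactors give a linear relation among u_0, ..., u_n (Cramer's rule for u_0).\<close>
lemma cofactor_relation:
  assumes "cofactor 0 (u::nat \<Rightarrow> real^'n::{finite,linorder}) \<noteq> 0"
  shows "(\<Sum>i\<le>CARD('n). cofactor i u *\<^sub>R u i) = 0"
proof -
  let ?B = "omit 0 u"
  have D: "coldet ?B \<noteq> 0" using assms by (simp add: cofactor_0)
  have tail: "?B m = u (Suc m)" for m by (simp add: omit_def)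
  have "(\<Sum>i\<le>CARD('n). cofactor i u *\<^sub>R u i) =
        coldet ?B *\<^sub>R u 0 - (\<Sum>m<CARD('n). coldet (?B(m := u 0)) *\<^sub>R ?B m)"
    unfolding sum.atMost_shift by (simp add: cofactor_0 cofactor_Suc tail sum_negf)
  also have "(\<Sum>m<CARD('n). coldet (?B(m := u 0)) *\<^sub>R ?B m) =
      coldet ?B *\<^sub>R (\<Sum>m<CARD('n). (coldet (?B(m := u 0)) / coldet ?B) *\<^sub>R ?B m)"
    using D by (simp add: scaleR_sum_right)
  also have "(\<Sum>m<CARD('n). (coldet (?B(m := u 0)) / coldet ?B) *\<^sub>R ?B m) = u 0"
    using coldet_cramer[OF D, of "u 0"] by simp
  finally show ?thesis by simp
qed

lemma relation_first_vector:
  fixes u :: "nat \<Rightarrow> 'a::real_vector"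
  assumes "(\<Sum>i\<le>N. \<mu> i *\<^sub>R u i) = 0"
  shows "\<mu> 0 *\<^sub>R u 0 = (\<Sum>j<N. (- \<mu> (Suc j)) *\<^sub>R omit 0 u j)"
  using assms unfolding sum.atMost_shift by (simp add: omit_def sum_negf eq_neg_iff_add_eq_0)

lemma cofactors_proportional:
  fixes u :: "nat \<Rightarrow> real^'n::{finite,linorder}"
  assumes rel: "(\<Sum>i\<le>CARD('n). \<mu> i *\<^sub>R u i) = 0" and i: "i \<le> CARD('n)"
  shows "\<mu> 0 * cofactor i u = \<mu> i * cofactor 0 u"
proof (cases i)
  case (Suc m)
  let ?B = "omit 0 u"
  have m: "m < CARD('n)" using i Suc by simp
  have "\<mu> 0 * coldet (?B(m := u 0)) = coldet (?B(m := \<mu> 0 *\<^sub>R u 0))"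
    by (rule coldet_scale[OF m, symmetric])
  also have "\<dots> = - \<mu> (Suc m) * coldet ?B"
    unfolding relation_first_vector[OF rel] by (rule coldet_upd_combination[OF m])
  finally show ?thesis using Suc m by (simp add: cofactor_Suc cofactor_0)
qed simp

section \<open>When is the origin inside the simplex?\<close>

definition same_strict_sign :: "nat \<Rightarrow> (nat \<Rightarrow> real) \<Rightarrow> bool" where
  "same_strict_sign N a \<longleftrightarrow> (\<forall>i\<le>N. 0 < a i) \<or> (\<forall>i\<le>N. a i < 0)"

lemma same_strict_sign_iff_sgn:
  "same_strict_sign N a \<longleftrightarrow> a 0 \<noteq> 0 \<and> (\<forall>i\<le>N. sgn (a i) = sgn (a 0))"
  unfolding same_strict_sign_def
proof
  assume "(\<forall>i\<le>N. 0 < a i) \<or> (\<forall>i\<le>N. a i < 0)"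
  then show "a 0 \<noteq> 0 \<and> (\<forall>i\<le>N. sgn (a i) = sgn (a 0))" by auto
next
  assume h: "a 0 \<noteq> 0 \<and> (\<forall>i\<le>N. sgn (a i) = sgn (a 0))"
  show "(\<forall>i\<le>N. 0 < a i) \<or> (\<forall>i\<le>N. a i < 0)"
  proof (cases "a 0 > 0")
    case True
    then have "sgn (a i) = 1" if "i \<le> N" for i using h that by simp
    then show ?thesis by (simp add: sgn_1_pos)
  next
    case False
    then have "sgn (a i) = -1" if "i \<le> N" for i using h that by simp
    then show ?thesis by (simp add: sgn_1_neg)
  qed
qed

lemma same_strict_sign_ratio: "same_strict_sign N a \<Longrightarrow> i \<le> N \<Longrightarrow> 0 < a i / a 0"
  unfolding same_strict_sign_def by (auto intro: divide_pos_pos divide_neg_neg)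

lemma zero_in_rel_interior_convex_hull:
  fixes u :: "nat \<Rightarrow> 'a::euclidean_space"
  assumes pos: "\<forall>i\<le>N. 0 < \<mu> i" and rel: "(\<Sum>i\<le>N. \<mu> i *\<^sub>R u i) = 0"
  shows "0 \<in> rel_interior (convex hull (u ` {..N}))"
proof -
  let ?S = "u ` {..N}"
  let ?fibre = "\<lambda>y. {i \<in> {..N}. u i = y}"
  define T where "T = (\<Sum>i\<le>N. \<mu> i)"
  have T: "T > 0" unfolding T_def using pos by (intro sum_pos) auto
  define \<nu> where "\<nu> y = (\<Sum>i\<in>?fibre y. \<mu> i / T)" for y
  have "\<exists>\<nu>. (\<forall>x\<in>?S. 0 < \<nu> x) \<and> sum \<nu> ?S = 1 \<and> (\<Sum>x\<in>?S. \<nu> x *\<^sub>R x) = 0"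
  proof (intro exI conjI ballI)
    fix x assume "x \<in> ?S"
    then obtain i where "i \<le> N" "u i = x" by auto
    then show "0 < \<nu> x" unfolding \<nu>_def
      using pos T by (intro sum_pos2[of _ i]) (auto intro: less_imp_le)
  next
    have "sum \<nu> ?S = (\<Sum>i\<le>N. \<mu> i / T)"
      unfolding \<nu>_def by (rule sum.image_gen[symmetric]) simp
    then show "sum \<nu> ?S = 1" using T by (simp add: T_def sum_divide_distrib[symmetric])
  next
    have "(\<Sum>x\<in>?S. \<nu> x *\<^sub>R x) = (\<Sum>y\<in>?S. \<Sum>i\<in>?fibre y. (\<mu> i / T) *\<^sub>R u i)"
      unfolding \<nu>_def scaleR_sum_left by (intro sum.cong refl) auto
    also have "\<dots> = (\<Sum>i\<le>N. (\<mu> i / T) *\<^sub>R u i)"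
      by (rule sum.image_gen[symmetric]) simp
    also have "\<dots> = (1 / T) *\<^sub>R (\<Sum>i\<le>N. \<mu> i *\<^sub>R u i)"
      by (simp add: scaleR_sum_right)
    finally show "(\<Sum>x\<in>?S. \<nu> x *\<^sub>R x) = 0" using rel by simp
  qed
  then show ?thesis
    using explicit_subset_rel_interior_convex_hull_minimal[of ?S] by blast
qed

lemma span_of_interior_convex_hull:
  fixes S :: "'a::euclidean_space set"
  assumes "interior (convex hull S) \<noteq> {}"
  shows "span S = UNIV"
  using affine_hull_nonempty_interior[OF assms] affine_hull_subset_span[of S]
  by (auto simp: affine_hull_convex_hull)

text \<open>A point in the interior of the convex hull of DIM+1 points is a strictly
  positive combination of them (the points are then affinely independent).\<close>
lemma positive_relation_of_zero_in_interior:
  fixes u :: "nat \<Rightarrow> 'a::euclidean_space"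
  assumes h: "0 \<in> interior (convex hull (u ` {..DIM('a)}))"
  shows "\<exists>\<mu>. (\<forall>i\<le>DIM('a). 0 < \<mu> i) \<and> (\<Sum>i\<le>DIM('a). \<mu> i *\<^sub>R u i) = 0"
proof -
  let ?S = "u ` {..DIM('a)}"
  have "\<not> card ?S \<le> DIM('a)"
    using empty_interior_convex_hull[of ?S] h by auto
  then have card: "card ?S = Suc DIM('a)"
    using card_image_le[of "{..DIM('a)}" u] by simp
  then have inj: "inj_on u {..DIM('a)}"
    using inj_on_iff_eq_card[of "{..DIM('a)}" u] by simp
  have "\<not> affine_dependent ?S"
    using interior_convex_hull_eq_empty[of ?S] card h by auto
  from interior_convex_hull_explicit_minimal[OF this] h card
  obtain \<nu> where \<nu>: "\<forall>x\<in>?S. 0 < \<nu> x" "(\<Sum>x\<in>?S. \<nu> x *\<^sub>R x) = 0"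
    by auto
  have "(\<Sum>i\<le>DIM('a). \<nu> (u i) *\<^sub>R u i) = 0"
    using \<nu>(2) unfolding sum.reindex[OF inj] by (simp add: o_def)
  with \<nu>(1) show ?thesis by (intro exI[of _ "\<nu> \<circ> u"]) auto
qed

text \<open>If the cofactors agree in sign, they give a positive relation, and the entries span.\<close>
lemma zero_in_interior_if_same_sign:
  fixes u :: "nat \<Rightarrow> real^'n::{finite,linorder}"
  assumes same: "same_strict_sign CARD('n) (\<lambda>i. cofactor i u)"
  shows "0 \<in> interior (convex hull (u ` {..CARD('n)}))"
proof -
  let ?S = "u ` {..CARD('n)}"
  have c0: "cofactor 0 u \<noteq> 0" using same by (simp add: same_strict_sign_iff_sgn)
  have "(\<Sum>i\<le>CARD('n). (cofactor i u / cofactor 0 u) *\<^sub>R u i) =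
        (1 / cofactor 0 u) *\<^sub>R (\<Sum>i\<le>CARD('n). cofactor i u *\<^sub>R u i)"
    by (simp add: scaleR_sum_right)
  then have "(\<Sum>i\<le>CARD('n). (cofactor i u / cofactor 0 u) *\<^sub>R u i) = 0"
    using cofactor_relation[OF c0] by simp
  then have rel_int: "0 \<in> rel_interior (convex hull ?S)"
    using same_strict_sign_ratio[OF same] by (intro zero_in_rel_interior_convex_hull) auto
  have "span (omit 0 u ` {..<CARD('n)}) = UNIV"
    using c0 by (simp add: cofactor_0 coldet_nonzero_iff_span)
  moreover have "omit 0 u ` {..<CARD('n)} \<subseteq> ?S" by (auto simp: omit_def)
  ultimately have "span ?S = UNIV" by (metis span_mono top.extremum_uniqueI)
  moreover have "0 \<in> affine hull ?S"
    using rel_int rel_interior_subset convex_hull_subset_affine_hull by blast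
  ultimately have "affine hull (convex hull ?S) = UNIV"
    by (simp add: affine_hull_span_0)
  then show ?thesis using rel_int rel_interior_interior by blast
qed

text \<open>Conversely, a positive relation forces the cofactors to be proportional to it.\<close>
lemma same_sign_if_zero_in_interior:
  fixes u :: "nat \<Rightarrow> real^'n::{finite,linorder}"
  assumes h: "0 \<in> interior (convex hull (u ` {..CARD('n)}))"
  shows "same_strict_sign CARD('n) (\<lambda>i. cofactor i u)"
proof -
  let ?B = "omit 0 u"
  obtain \<mu> where pos: "\<forall>i\<le>CARD('n). 0 < \<mu> i" and rel: "(\<Sum>i\<le>CARD('n). \<mu> i *\<^sub>R u i) = 0"
    using positive_relation_of_zero_in_interior[of u] h by auto
  have "u 0 = (1 / \<mu> 0) *\<^sub>R (\<mu> 0 *\<^sub>R u 0)" using pos[rule_format, of 0] by simp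
  also have "\<dots> = (1 / \<mu> 0) *\<^sub>R (\<Sum>j<CARD('n). (- \<mu> (Suc j)) *\<^sub>R ?B j)"
    unfolding relation_first_vector[OF rel] ..
  also have "\<dots> \<in> span (?B ` {..<CARD('n)})"
    by (intro span_mul span_sum span_base) auto
  finally have u0: "u 0 \<in> span (?B ` {..<CARD('n)})" .
  have "u ` {..CARD('n)} \<subseteq> span (?B ` {..<CARD('n)})"
  proof (rule image_subsetI)
    fix i assume i: "i \<in> {..CARD('n)}"
    show "u i \<in> span (?B ` {..<CARD('n)})"
    proof (cases i)
      case (Suc m)
      then have "u i = ?B m" "m < CARD('n)" using i by (auto simp: omit_def)
      then show ?thesis by (auto intro: span_base)
    qed (use u0 in simp)
  qed
  then have "span (?B ` {..<CARD('n)}) = UNIV"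
    using span_of_interior_convex_hull[of "u ` {..CARD('n)}"] h
    by (metis empty_iff span_minimal subspace_span top.extremum_uniqueI)
  then have c0: "cofactor 0 u \<noteq> 0" by (simp add: cofactor_0 coldet_nonzero_iff_span)
  have "sgn (cofactor i u) = sgn (cofactor 0 u)" if i: "i \<le> CARD('n)" for i
  proof -
    have "\<mu> 0 * cofactor i u = \<mu> i * cofactor 0 u" by (rule cofactors_proportional[OF rel i])
    then have "sgn (\<mu> 0) * sgn (cofactor i u) = sgn (\<mu> i) * sgn (cofactor 0 u)"
      by (metis sgn_mult)
    then show ?thesis using pos i by simp
  qed
  then show ?thesis unfolding same_strict_sign_iff_sgn using c0 by blast
qed

lemma S_eq_cofactor_sign:
  "S (u::nat \<Rightarrow> real^'n::{finite,linorder}) =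
   (if same_strict_sign CARD('n) (\<lambda>i. cofactor i u) then sgn (cofactor 0 u) else 0)"
proof -
  have "omit 0 u = (\<lambda>k. u (Suc k))" by (simp add: fun_eq_iff omit_def)
  then have "Or (\<lambda>k. u (Suc k)) = sgn (cofactor 0 u)" by (simp add: Or_eq_sgn_coldet cofactor_0)
  then show ?thesis unfolding S_def
    using zero_in_interior_if_same_sign[of u] same_sign_if_zero_in_interior[of u] by auto
qed

section \<open>The closed formula for Sm in even dimension\<close>

lemma involution_power_even: "x * x = 1 \<Longrightarrow> even m \<Longrightarrow> x ^ m = (1::'a::monoid_mult)"
  by (metis evenE power2_eq_square power_mult power_one)

lemma sgn_prod: "sgn (prod f A) = (\<Prod>x\<in>A. sgn (f x :: 'a::linordered_idom))"
  by (induction A rule: infinite_finite_induct) (auto simp: sgn_mult)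

lemma prod_omit_times:
  assumes "i \<le> n"
  shows "(\<Prod>k<n. omit i f k) * f i = (\<Prod>k\<le>n. f k :: 'a::comm_monoid_mult)"
proof -
  have "(\<Prod>k<n. omit i f k) = (\<Prod>j\<in>{..n} - {i}. f j)"
    unfolding omit_skip by (rule prod.reindex_bij_betw[OF bij_skip[OF assms]])
  then show ?thesis using assms by (simp add: prod.remove mult.commute)
qed

lemma sgn_cofactor_scale:
  fixes u :: "nat \<Rightarrow> real^'n::{finite,linorder}"
  assumes c: "\<forall>j\<le>CARD('n). c j \<noteq> 0" and i: "i \<le> CARD('n)"
  shows "sgn (cofactor i (\<lambda>j. c j *\<^sub>R u j)) =
         (\<Prod>j\<le>CARD('n). sgn (c j)) * sgn (c i) * sgn (cofactor i u)"
proof -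
  let ?s = "\<lambda>j. sgn (c j)"
  have sq: "?s i * ?s i = 1" using c i by (auto simp: sgn_real_def)
  have "sgn (\<Prod>k<CARD('n). omit i c k) = (\<Prod>k<CARD('n). omit i ?s k)"
    unfolding sgn_prod by (intro prod.cong) (simp_all add: omit_def)
  also have "\<dots> = (\<Prod>k<CARD('n). omit i ?s k) * ?s i * ?s i"
    using sq by (simp add: mult.assoc)
  also have "\<dots> = (\<Prod>j\<le>CARD('n). ?s j) * ?s i"
    using prod_omit_times[OF i, of ?s] by simp
  finally show ?thesis by (simp add: cofactor_scale sgn_mult)
qed

abbreviation sign_vectors :: "nat \<Rightarrow> (nat \<Rightarrow> real) set" where
  "sign_vectors N \<equiv> Pi\<^sub>E {..N} (\<lambda>_. {-1, 1})"

lemma aligned_sign_product: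
  fixes \<sigma> e :: "nat \<Rightarrow> real"
  assumes ev: "even N" and \<sigma>: "\<forall>j\<le>N. \<sigma> j \<in> {-1, 1}" and e: "\<forall>j\<le>N. e j \<in> {-1, 1}"
    and aligned: "\<forall>i\<le>N. \<sigma> i * e i = t"
  shows "(\<Prod>j\<le>N. \<sigma> j) * t = (\<Prod>j\<le>N. e j)"
proof -
  have "\<sigma> 0 \<in> {-1, 1}" "e 0 \<in> {-1, 1}" using \<sigma> e by auto
  then have "t \<in> {-1, 1}" using aligned[rule_format, of 0] by auto
  then have tt: "t * t = 1" by auto
  have "\<sigma> j = t * e j" if "j \<le> N" for j
  proof -
    have "e j * e j = 1" using e that by auto
    then have "\<sigma> j = (\<sigma> j * e j) * e j" by (simp add: mult.assoc)
    then show ?thesis using aligned that by simp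
  qed
  then have "(\<Prod>j\<le>N. \<sigma> j) = (\<Prod>j\<le>N. t * e j)" by (intro prod.cong) auto
  also have "\<dots> = t * t ^ N * (\<Prod>j\<le>N. e j)" by (simp add: prod.distrib)
  also have "t ^ N = 1" using tt ev by (rule involution_power_even)
  finally show ?thesis using tt by (simp add: mult_ac)
qed

lemma S_sign_flip:
  fixes u :: "nat \<Rightarrow> real^'n::{finite,linorder}"
  assumes ev: "even CARD('n)" and nz: "\<forall>i\<le>CARD('n). cofactor i u \<noteq> 0"
    and \<sigma>: "\<sigma> \<in> sign_vectors CARD('n)"
  defines "e \<equiv> \<lambda>i. sgn (cofactor i u)"
  shows "S (\<lambda>j. \<sigma> j *\<^sub>R u j) =
         (if \<forall>i\<le>CARD('n). \<sigma> i * e i = \<sigma> 0 * e 0 then \<Prod>i\<le>CARD('n). e i else 0)"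
proof -
  let ?v = "\<lambda>j. \<sigma> j *\<^sub>R u j"
  let ?P = "\<Prod>j\<le>CARD('n). \<sigma> j"
  define t where "t = \<sigma> 0 * e 0"
  have \<sigma>pm: "\<sigma> j \<in> {-1, 1}" if "j \<le> CARD('n)" for j using \<sigma> that by (auto simp: PiE_iff)
  have epm: "e j \<in> {-1, 1}" if "j \<le> CARD('n)" for j using nz that by (auto simp: e_def sgn_real_def)
  have \<sigma>0: "\<forall>j\<le>CARD('n). \<sigma> j \<noteq> 0" using \<sigma>pm by fastforce
  then have P: "?P \<noteq> 0" by (simp add: prod_zero_iff)
  have sgn\<sigma>: "sgn (\<sigma> j) = \<sigma> j" if "j \<le> CARD('n)" for j using \<sigma>pm[OF that] by auto
  have flip: "sgn (cofactor i ?v) = ?P * (\<sigma> i * e i)" if i: "i \<le> CARD('n)" for i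
  proof -
    have "(\<Prod>j\<le>CARD('n). sgn (\<sigma> j)) = ?P" by (intro prod.cong) (simp_all add: sgn\<sigma>)
    then show ?thesis
      using sgn_cofactor_scale[OF \<sigma>0 i, of u] sgn\<sigma>[OF i] by (simp add: e_def mult.assoc)
  qed
  show ?thesis
  proof (cases "\<forall>i\<le>CARD('n). \<sigma> i * e i = t")
    case True
    have "sgn (cofactor 0 ?v) = ?P * t" using flip[of 0] by (simp add: t_def)
    also have "\<dots> = (\<Prod>j\<le>CARD('n). e j)"
      using ev \<sigma>pm epm True by (intro aligned_sign_product) auto
    finally have S0: "sgn (cofactor 0 ?v) = (\<Prod>j\<le>CARD('n). e j)" .
    have "e j \<noteq> 0" if "j \<le> CARD('n)" for j using epm[OF that] by auto
    then have "cofactor 0 ?v \<noteq> 0" using S0 by (auto simp: prod_zero_iff)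
    moreover have "\<forall>i\<le>CARD('n). sgn (cofactor i ?v) = sgn (cofactor 0 ?v)"
      using flip True by simp
    ultimately have "same_strict_sign CARD('n) (\<lambda>i. cofactor i ?v)"
      unfolding same_strict_sign_iff_sgn by blast
    then show ?thesis using True S0 by (simp add: S_eq_cofactor_sign)
  next
    case False
    have "\<not> same_strict_sign CARD('n) (\<lambda>i. cofactor i ?v)"
    proof
      assume "same_strict_sign CARD('n) (\<lambda>i. cofactor i ?v)"
      then have "\<forall>i\<le>CARD('n). ?P * (\<sigma> i * e i) = ?P * t"
        unfolding same_strict_sign_iff_sgn using flip flip[of 0] by (simp add: t_def)
      then show False using False P by simp
    qed
    then show ?thesis using False by (simp add: S_eq_cofactor_sign t_def[symmetric]) blast
  qed
qed

lemma aligned_sign_vectors: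
  assumes e: "\<forall>i\<le>N. e i \<in> {-1, 1::real}"
  shows "{\<sigma> \<in> sign_vectors N. \<forall>i\<le>N. \<sigma> i * e i = \<sigma> 0 * e 0} =
           {restrict e {..N}, restrict (\<lambda>i. - e i) {..N}}" (is "?A = ?B")
    and "restrict e {..N} \<noteq> restrict (\<lambda>i. - e i) {..N}"
proof -
  have sq: "e i * e i = 1" if "i \<le> N" for i using e that by auto
  show "?A = ?B"
  proof (intro equalityI subsetI)
    fix \<sigma> assume "\<sigma> \<in> ?A"
    then have \<sigma>: "\<sigma> \<in> sign_vectors N" and al: "\<forall>i\<le>N. \<sigma> i * e i = \<sigma> 0 * e 0" by blast+
    have form: "\<sigma> i = (\<sigma> 0 * e 0) * e i" if "i \<le> N" for i
    proof -
      have "\<sigma> i = (\<sigma> i * e i) * e i" using sq[OF that] by (simp add: mult.assoc)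
      also have "\<sigma> i * e i = \<sigma> 0 * e 0" using al that by blast
      finally show ?thesis .
    qed
    have ext: "\<sigma> \<in> extensional {..N}" using \<sigma> by (simp add: PiE_iff)
    have "\<sigma> 0 \<in> {-1, 1}" using \<sigma> by (auto simp: PiE_iff)
    then have "\<sigma> 0 * e 0 = 1 \<or> \<sigma> 0 * e 0 = -1" using e[rule_format, of 0] by auto
    then show "\<sigma> \<in> ?B"
    proof
      assume t: "\<sigma> 0 * e 0 = 1"
      have "\<sigma> i = e i" if "i \<le> N" for i using form[OF that] t by simp
      then have "\<sigma> = restrict e {..N}"
        by (intro extensionalityI[OF ext restrict_extensional]) simp
      then show ?thesis by simp
    next
      assume t: "\<sigma> 0 * e 0 = -1"
      have "\<sigma> i = - e i" if "i \<le> N" for i using form[OF that] t by simp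
      then have "\<sigma> = restrict (\<lambda>i. - e i) {..N}"
        by (intro extensionalityI[OF ext restrict_extensional]) simp
      then show ?thesis by simp
    qed
  next
    fix \<sigma> assume "\<sigma> \<in> ?B"
    then consider "\<sigma> = restrict e {..N}" | "\<sigma> = restrict (\<lambda>i. - e i) {..N}" by blast
    then show "\<sigma> \<in> ?A"
      by cases (use e sq in \<open>auto simp: PiE_iff\<close>)
  qed
  show "restrict e {..N} \<noteq> restrict (\<lambda>i. - e i) {..N}"
  proof
    assume "restrict e {..N} = restrict (\<lambda>i. - e i) {..N}"
    then have "e 0 = - e 0" by (metis atMost_iff le0 restrict_apply')
    then show False using e by auto
  qed
qed

lemma Sm_closed_formula:
  fixes u :: "nat \<Rightarrow> real^'n::{finite,linorder}"
  assumes ev: "even CARD('n)"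
  shows "Sm u = (\<Prod>i\<le>CARD('n). sgn (cofactor i u)) / 2 ^ CARD('n)"
proof (cases "\<forall>i\<le>CARD('n). cofactor i u \<noteq> 0")
  case False
  then obtain i0 where i0: "i0 \<le> CARD('n)" "cofactor i0 u = 0" by auto
  have "S (\<lambda>j. \<sigma> j *\<^sub>R u j) = 0" for \<sigma>
  proof -
    have "cofactor i0 (\<lambda>j. \<sigma> j *\<^sub>R u j) = 0" using i0 by (simp add: cofactor_scale)
    then show ?thesis using i0 by (auto simp: S_eq_cofactor_sign same_strict_sign_def)
  qed
  moreover have "(\<Prod>i\<le>CARD('n). sgn (cofactor i u)) = 0"
    using i0 by (intro prod_zero bexI[of _ i0]) auto
  ultimately show ?thesis by (simp add: Sm_def)
next
  case True
  let ?e = "\<lambda>i. sgn (cofactor i u)"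
  let ?Q = "\<Prod>i\<le>CARD('n). ?e i"
  let ?aligned = "\<lambda>\<sigma>. \<forall>i\<le>CARD('n). \<sigma> i * ?e i = \<sigma> 0 * ?e 0"
  have e: "\<forall>i\<le>CARD('n). ?e i \<in> {-1, 1}" using True by (auto simp: sgn_real_def)
  have "(\<Sum>\<sigma>\<in>sign_vectors CARD('n). S (\<lambda>j. \<sigma> j *\<^sub>R u j)) =
        (\<Sum>\<sigma>\<in>sign_vectors CARD('n). if ?aligned \<sigma> then ?Q else 0)"
    by (intro sum.cong refl) (rule S_sign_flip[OF ev True])
  also have "\<dots> = (\<Sum>\<sigma>\<in>{\<sigma> \<in> sign_vectors CARD('n). ?aligned \<sigma>}. ?Q)"
    by (rule sum.inter_filter[symmetric]) (simp add: finite_PiE)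
  also have "\<dots> = 2 * ?Q"
    using aligned_sign_vectors[OF e] by simp
  finally show ?thesis by (simp add: Sm_def)
qed

lemma Sm_rescale:
  fixes v :: "nat \<Rightarrow> real^'n::{finite,linorder}"
  assumes ev: "even CARD('n)" and c: "\<forall>i\<le>CARD('n). c i \<noteq> 0"
  shows "Sm (\<lambda>i. c i *\<^sub>R v i) = Sm v"
proof -
  let ?P = "\<Prod>j\<le>CARD('n). sgn (c j)"
  have "?P * ?P = (\<Prod>j\<le>CARD('n). sgn (c j) * sgn (c j))" by (rule prod.distrib[symmetric])
  also have "\<dots> = 1" using c by (intro prod.neutral) (auto simp: sgn_real_def)
  finally have P: "?P * ?P = 1" .
  have "(\<Prod>i\<le>CARD('n). sgn (cofactor i (\<lambda>j. c j *\<^sub>R v j))) =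
        (\<Prod>i\<le>CARD('n). ?P * sgn (c i) * sgn (cofactor i v))"
    using sgn_cofactor_scale[OF c] by (intro prod.cong) auto
  also have "\<dots> = ?P ^ (CARD('n) + 2) * (\<Prod>i\<le>CARD('n). sgn (cofactor i v))"
    by (simp add: prod.distrib)
  also have "?P ^ (CARD('n) + 2) = 1" using P ev by (intro involution_power_even) auto
  finally show ?thesis by (simp add: Sm_closed_formula[OF ev])
qed

lemma Sm_equivariant:
  fixes v :: "nat \<Rightarrow> real^'n::{finite,linorder}"
  assumes ev: "even CARD('n)" and g: "invertible g"
  shows "Sm (\<lambda>i. g *v v i) = sgn (det g) * Sm v"
proof -
  let ?s = "sgn (det g)"
  have "?s * ?s = 1" using g by (auto simp: invertible_det_nz sgn_real_def)
  then have s: "?s ^ CARD('n) = 1" using ev by (rule involution_power_even)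
  have "(\<Prod>i\<le>CARD('n). sgn (cofactor i (\<lambda>j. g *v v j))) =
        ?s ^ Suc CARD('n) * (\<Prod>i\<le>CARD('n). sgn (cofactor i v))"
    by (simp add: cofactor_matrix_mult sgn_mult prod.distrib)
  then show ?thesis using s by (simp add: Sm_closed_formula[OF ev])
qed

section \<open>A sign identity for an even number of points in the plane\<close>

text \<open>cross2 p q i j is the determinant of the planar points z_i = (p_i, q_i) and z_j.\<close>
definition cross2 :: "(nat \<Rightarrow> real) \<Rightarrow> (nat \<Rightarrow> real) \<Rightarrow> nat \<Rightarrow> nat \<Rightarrow> real" where
  "cross2 p q i j = p i * q j - p j * q i"

lemma cross2_antisym: "cross2 p q j i = - cross2 p q i j"
  by (simp add: cross2_def)

lemma cross2_self: "cross2 p q i i = 0"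
  by (simp add: cross2_def)

lemma cross2_upper_trans:
  assumes q: "q i \<ge> 0" "q j \<ge> 0" "q k \<ge> 0"
    and ki: "cross2 p q k i > 0" and ij: "cross2 p q i j > 0" and kj: "cross2 p q k j \<noteq> 0"
  shows "cross2 p q k j > 0"
proof (rule ccontr)
  assume "\<not> cross2 p q k j > 0"
  then have jk: "cross2 p q j k > 0" using kj cross2_antisym[of p q k j] by linarith
  have "cross2 p q k i * q j + cross2 p q i j * q k + cross2 p q j k * q i = 0"
    by (simp add: cross2_def algebra_simps)
  moreover have "cross2 p q k i * q j \<ge> 0" "cross2 p q i j * q k \<ge> 0" "cross2 p q j k * q i \<ge> 0"
    using q ki ij jk by simp_all
  ultimately have "cross2 p q k i * q j = 0" "cross2 p q i j * q k = 0" "cross2 p q j k * q i = 0"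
    by linarith+
  then have "q i = 0" "q j = 0" "q k = 0" using ki ij jk by simp_all
  then have "cross2 p q k i = 0" by (simp add: cross2_def)
  with ki show False by simp
qed

lemma sum_alternating_permutation:
  assumes "inj_on r {..<M}" "r ` {..<M} \<subseteq> {..<M}" "even M"
  shows "(\<Sum>i<M. (-1::real) ^ r i) = 0"
proof -
  have "r ` {..<M} = {..<M}"
    using assms(1,2) by (metis card_image card_lessThan card_subset_eq finite_lessThan)
  then have "bij_betw r {..<M} {..<M}" using assms(1) by (simp add: bij_betw_def)
  then have "(\<Sum>i<M. (-1::real) ^ r i) = (\<Sum>k<M. (-1::real) ^ k)"
    by (rule sum.reindex_bij_betw)
  also have "\<dots> = 0"
  proof -
    obtain m where "M = 2 * m" using assms(3) by (rule evenE)
    moreover have "(\<Sum>k<2 * m. (-1::real) ^ k) = 0" by (induction m) (auto simp: algebra_simps)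
    ultimately show ?thesis by simp
  qed
  finally show ?thesis .
qed

definition clockwise :: "(nat \<Rightarrow> real) \<Rightarrow> (nat \<Rightarrow> real) \<Rightarrow> nat \<Rightarrow> nat \<Rightarrow> nat set" where
  "clockwise p q M i = {j \<in> {..<M}. cross2 p q i j < 0}"

lemma clockwise_strict_mono:
  assumes q: "\<forall>i<M. q i \<ge> 0" and nz: "\<forall>i<M. \<forall>j<M. i \<noteq> j \<longrightarrow> cross2 p q i j \<noteq> 0"
    and ij: "i < M" "j < M" "cross2 p q i j > 0"
  shows "clockwise p q M i \<subset> clockwise p q M j"
proof
  show "clockwise p q M i \<subseteq> clockwise p q M j"
  proof
    fix k assume "k \<in> clockwise p q M i"
    then have k: "k < M" "cross2 p q k i > 0"
      using cross2_antisym[of p q k i] by (auto simp: clockwise_def)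
    moreover have "k \<noteq> j" using k ij cross2_antisym[of p q i j] by auto
    ultimately have "cross2 p q k j > 0" using cross2_upper_trans[of q i j k p] q nz ij by auto
    then show "k \<in> clockwise p q M j" using k cross2_antisym[of p q k j] by (simp add: clockwise_def)
  qed
  have "i \<in> clockwise p q M j" using ij cross2_antisym[of p q i j] by (simp add: clockwise_def)
  moreover have "i \<notin> clockwise p q M i" by (simp add: clockwise_def cross2_self)
  ultimately show "clockwise p q M i \<noteq> clockwise p q M j" by auto
qed

text \<open>For pairwise independent points in the upper half plane, the number r i of points
  clockwise from z_i determines z_i, so r permutes {..<M} and the signed products cancel.\<close>
lemma planar_sign_sum_upper:
  fixes p q :: "nat \<Rightarrow> real"
  assumes ev: "even M" and q: "\<forall>i<M. q i \<ge> 0"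
    and nz: "\<forall>i<M. \<forall>j<M. i \<noteq> j \<longrightarrow> cross2 p q i j \<noteq> 0"
  shows "(\<Sum>i<M. \<Prod>j\<in>{..<M} - {i}. sgn (cross2 p q i j)) = 0"
proof -
  define r where "r i = card (clockwise p q M i)" for i
  have below: "clockwise p q M i \<subseteq> {..<M} - {i}" for i
    by (auto simp: clockwise_def cross2_self)
  have prod_eq: "(\<Prod>j\<in>{..<M} - {i}. sgn (cross2 p q i j)) = (-1) ^ r i" if i: "i < M" for i
  proof -
    have "(\<Prod>j\<in>{..<M} - {i}. sgn (cross2 p q i j)) =
          (\<Prod>j\<in>{..<M} - {i}. if j \<in> clockwise p q M i then -1 else 1)"
      using nz i by (intro prod.cong refl) (auto simp: clockwise_def sgn_real_def)
    also have "\<dots> = (-1) ^ card (({..<M} - {i}) \<inter> clockwise p q M i)"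
      by (simp add: prod.If_cases)
    finally show ?thesis using below[of i] by (simp add: r_def Int_absorb1)
  qed
  have "inj_on r {..<M}"
  proof
    fix i j assume i: "i \<in> {..<M}" and j: "j \<in> {..<M}" and r: "r i = r j"
    show "i = j"
    proof (rule ccontr)
      assume "i \<noteq> j"
      then have "cross2 p q i j > 0 \<or> cross2 p q j i > 0"
        using nz i j cross2_antisym[of p q i j] by force
      then have "r i < r j \<or> r j < r i"
        using clockwise_strict_mono[OF q nz] i j unfolding r_def
        by (meson finite_lessThan finite_subset lessThan_iff below psubset_card_mono Diff_subset)
      with r show False by simp
    qed
  qed
  moreover have "r ` {..<M} \<subseteq> {..<M}"
  proof (rule image_subsetI)
    fix i assume i: "i \<in> {..<M}"
    have "r i \<le> card ({..<M} - {i})" unfolding r_def using below by (intro card_mono) auto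
    then show "r i \<in> {..<M}" using i by simp
  qed
  ultimately have "(\<Sum>i<M. (-1::real) ^ r i) = 0" using ev by (rule sum_alternating_permutation)
  then show ?thesis using prod_eq by simp
qed

text \<open>Reflecting the points of the lower half plane through the origin only changes every
  summand by the same sign, so the identity holds for arbitrary pairwise independent points.\<close>
lemma planar_sign_sum:
  fixes p q :: "nat \<Rightarrow> real"
  assumes ev: "even M"
    and nz: "\<forall>i<M. \<forall>j<M. i \<noteq> j \<longrightarrow> cross2 p q i j \<noteq> 0"
  shows "(\<Sum>i<M. \<Prod>j\<in>{..<M} - {i}. sgn (cross2 p q i j)) = 0"
proof -
  define \<tau> where "\<tau> i = (if q i \<ge> 0 then 1 else -1::real)" for i
  define p' where "p' i = \<tau> i * p i" for i
  define q' where "q' i = \<tau> i * q i" for i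
  define T where "T = (\<Prod>j<M. \<tau> j)"
  have \<tau>sq: "\<tau> i * \<tau> i = 1" for i by (simp add: \<tau>_def)
  have reflected: "cross2 p' q' i j = \<tau> i * \<tau> j * cross2 p q i j" for i j
    by (simp add: cross2_def p'_def q'_def algebra_simps)
  have sgn_eq: "sgn (cross2 p q i j) = \<tau> i * \<tau> j * sgn (cross2 p' q' i j)" for i j
    by (auto simp: reflected sgn_mult \<tau>_def)
  have summand: "(\<Prod>j\<in>{..<M} - {i}. sgn (cross2 p q i j)) = T * (\<Prod>j\<in>{..<M} - {i}. sgn (cross2 p' q' i j))"
    if i: "i < M" for i
  proof -
    have "(\<Prod>j\<in>{..<M} - {i}. sgn (cross2 p q i j)) =
        \<tau> i ^ (M - 1) * (\<Prod>j\<in>{..<M} - {i}. \<tau> j) * (\<Prod>j\<in>{..<M} - {i}. sgn (cross2 p' q' i j))"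
      using i unfolding sgn_eq by (simp add: prod.distrib)
    also have "(\<Prod>j\<in>{..<M} - {i}. \<tau> j) = \<tau> i * T"
      unfolding T_def using i \<tau>sq by (simp add: prod.remove mult.assoc[symmetric])
    also have "\<tau> i ^ (M - 1) * (\<tau> i * T) = \<tau> i ^ M * T"
      using i by (simp add: power_eq_if[of _ M] mult.assoc)
    also have "\<tau> i ^ M = 1" using \<tau>sq ev by (rule involution_power_even)
    finally show ?thesis by simp
  qed
  have "(\<Sum>i<M. \<Prod>j\<in>{..<M} - {i}. sgn (cross2 p q i j)) =
        T * (\<Sum>i<M. \<Prod>j\<in>{..<M} - {i}. sgn (cross2 p' q' i j))"
    unfolding sum_distrib_left using summand by (intro sum.cong) auto
  also have "(\<Sum>i<M. \<Prod>j\<in>{..<M} - {i}. sgn (cross2 p' q' i j)) = 0"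
    using nz by (intro planar_sign_sum_upper[OF ev]) (auto simp: q'_def \<tau>_def reflected)
  finally show ?thesis by simp
qed

section \<open>Minors of an (n+2)-tuple as planar determinants\<close>

text \<open>A two-column version of the Sylvester identity: updating two columns of an invertible
  matrix is governed by the four single-column updates.\<close>
lemma coldet_two_updates:
  fixes B :: "nat \<Rightarrow> real^'n::{finite,linorder}"
  assumes ab: "a \<noteq> b" "a < CARD('n)" "b < CARD('n)" and D: "coldet B \<noteq> 0"
  shows "coldet B * coldet (B(a := x, b := y)) =
         coldet (B(a := x)) * coldet (B(b := y)) - coldet (B(b := x)) * coldet (B(a := y))"
proof -
  let ?c = "\<lambda>m. coldet (B(m := y)) / coldet B"
  let ?X = "coldet (B(a := x))" and ?Y = "coldet (B(b := x))"
  have column: "?c m * coldet (B(a := x, b := B m)) =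
      (if m = b then ?c b * ?X else 0) + (if m = a then - (?c a * ?Y) else 0)"
    if m: "m < CARD('n)" for m
  proof -
    consider "m = b" | "m = a" | "m \<noteq> a" "m \<noteq> b" by blast
    then show ?thesis
    proof cases
      case 1
      have "B(a := x, b := B b) = B(a := x)" using ab by (auto simp: fun_eq_iff)
      then show ?thesis using 1 ab by simp
    next
      case 2
      have "B(a := x, b := B a) = (B(b := x))(a := (B(b := x)) b, b := (B(b := x)) a)"
        using ab by (auto simp: fun_eq_iff)
      then show ?thesis using 2 ab coldet_swap[of a b "B(b := x)"] by simp
    next
      case 3
      then show ?thesis using ab m by (auto intro: coldet_repeated[of m b])
    qed
  qed
  have "coldet (B(a := x, b := y)) = coldet (B(a := x, b := (\<Sum>m<CARD('n). ?c m *\<^sub>R B m)))"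
    using coldet_cramer[OF D, of y] by simp
  also have "\<dots> = (\<Sum>m<CARD('n). ?c m * coldet (B(a := x, b := B m)))"
    using ab by (simp add: coldet_sum coldet_scale)
  also have "\<dots> = (\<Sum>m<CARD('n). (if m = b then ?c b * ?X else 0) + (if m = a then - (?c a * ?Y) else 0))"
    by (intro sum.cong refl column) simp
  also have "\<dots> = ?c b * ?X - ?c a * ?Y"
    using ab by (simp add: sum.distrib)
  finally show ?thesis using D by (simp add: field_simps)
qed

text \<open>The last n entries of an (n+2)-tuple, which will serve as a basis.\<close>
definition tail2 :: "(nat \<Rightarrow> 'a) \<Rightarrow> nat \<Rightarrow> 'a" where
  "tail2 w m = w (m + 2)"

text \<open>Planar Gale points z_k = (gale_x w k, gale_y w k) of the tuple: z_0 = (1, 0),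
  z_1 = (0, 1), and for k \<ge> 2 minus the (k-2)-th coordinates of w_0 and w_1 in the basis.\<close>
definition gale_x :: "(nat \<Rightarrow> real^'n::{finite,linorder}) \<Rightarrow> nat \<Rightarrow> real" where
  "gale_x w k = (if k = 0 then 1 else if k = 1 then 0
                 else - coldet ((tail2 w)(k - 2 := w 0)) / coldet (tail2 w))"

definition gale_y :: "(nat \<Rightarrow> real^'n::{finite,linorder}) \<Rightarrow> nat \<Rightarrow> real" where
  "gale_y w k = (if k = 0 then 0 else if k = 1 then 1
                 else - coldet ((tail2 w)(k - 2 := w 1)) / coldet (tail2 w))"

lemma omit_0_omit_1: "omit 0 (omit 1 w) = tail2 w"
  by (auto simp: fun_eq_iff omit_def tail2_def)

lemma omit_0_omit: "2 \<le> j \<Longrightarrow> omit 0 (omit j w) = prepend (w 1) (omit (j - 2) (tail2 w))"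
  by (auto simp: fun_eq_iff omit_def tail2_def prepend_def)

lemma omit_1_omit: "2 \<le> j \<Longrightarrow> omit 1 (omit j w) = prepend (w 0) (omit (j - 2) (tail2 w))"
  by (auto simp: fun_eq_iff omit_def tail2_def prepend_def)

lemma omit_omit_tail2:
  assumes "2 \<le> i" "i < j"
  shows "omit i (omit j w) = prepend (w 0) (omit (i - 1) (prepend (w 1) (omit (j - 2) (tail2 w))))"
proof (rule ext)
  fix m
  consider "m = 0" | "m = 1" | k where "m = Suc (Suc k)" by (metis One_nat_def nat.exhaust)
  then show "omit i (omit j w) m = prepend (w 0) (omit (i - 1) (prepend (w 1) (omit (j - 2) (tail2 w)))) m"
    by cases (use assms in \<open>auto simp: omit_def tail2_def prepend_def\<close>)
qed

lemma prepend_omit_tail2_upd: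
  assumes "2 \<le> i" "i < j"
  shows "(prepend (w 1) (omit (j - 2) (tail2 w)))(i - 1 := w 0) =
         prepend (w 1) (omit (j - 2) ((tail2 w)(i - 2 := w 0)))"
proof (rule ext)
  fix m
  consider "m = 0" | "m = 1" | k where "m = Suc (Suc k)" by (metis One_nat_def nat.exhaust)
  then show "((prepend (w 1) (omit (j - 2) (tail2 w)))(i - 1 := w 0)) m =
      prepend (w 1) (omit (j - 2) ((tail2 w)(i - 2 := w 0))) m"
    by cases (use assms in \<open>auto simp: omit_def tail2_def prepend_def intro!: arg_cong[where f=w]\<close>)
qed

lemma minor_omit_high:
  fixes w :: "nat \<Rightarrow> real^'n::{finite,linorder}"
  assumes ab: "a < b" "b < CARD('n)"
  shows "coldet (omit (a + 2) (omit (b + 2) w)) =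
         (-1) ^ Suc (a + b) * coldet ((tail2 w)(a := w 0, b := w 1))"
proof -
  let ?B = "tail2 w"
  have i: "2 \<le> a + 2" and ij: "a + 2 < b + 2" using ab by simp_all
  have "coldet (omit (a + 2) (omit (b + 2) w)) =
      (-1) ^ Suc a * coldet ((prepend (w 1) (omit b ?B))(Suc a := w 0))"
    unfolding omit_omit_tail2[OF i ij] using ab by (simp add: coldet_prepend_omit)
  also have "(prepend (w 1) (omit b ?B))(Suc a := w 0) = prepend (w 1) (omit b (?B(a := w 0)))"
    using prepend_omit_tail2_upd[OF i ij, of w] by simp
  also have "coldet \<dots> = (-1) ^ b * coldet (?B(a := w 0, b := w 1))"
    using ab by (simp add: coldet_prepend_omit)
  finally show ?thesis by (simp add: power_add)
qed

lemma minor_eq_cross2: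
  fixes w :: "nat \<Rightarrow> real^'n::{finite,linorder}"
  assumes D: "coldet (tail2 w) \<noteq> 0" and ij: "i < j" "j \<le> CARD('n) + 1"
  shows "coldet (omit i (omit j w)) =
         - ((-1) ^ (i + j)) * cross2 (gale_x w) (gale_y w) i j * coldet (tail2 w)"
proof -
  let ?B = "tail2 w"
  consider "i = 0" "j = 1" | "i = 0" "j \<ge> 2" | "i = 1" "j \<ge> 2" | "i \<ge> 2" using ij by linarith
  then show ?thesis
  proof cases
    case 1
    then show ?thesis using omit_0_omit_1[of w] by (simp add: cross2_def gale_x_def gale_y_def)
  next
    case 2
    define b where "b = j - 2"
    have b: "j = b + 2" "b < CARD('n)" using 2 ij by (auto simp: b_def)
    have "coldet (omit i (omit j w)) = (-1) ^ b * coldet (?B(b := w 1))"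
      using 2 b by (simp add: omit_0_omit coldet_prepend_omit)
    moreover have "cross2 (gale_x w) (gale_y w) i j = - coldet (?B(b := w 1)) / coldet ?B"
      using 2 b by (simp add: cross2_def gale_x_def gale_y_def)
    ultimately show ?thesis using 2 b D by (simp add: power_add)
  next
    case 3
    define b where "b = j - 2"
    have b: "j = b + 2" "b < CARD('n)" using 3 ij by (auto simp: b_def)
    have "coldet (omit i (omit j w)) = (-1) ^ b * coldet (?B(b := w 0))"
      using 3 b omit_1_omit[of j w] by (simp add: coldet_prepend_omit)
    moreover have "cross2 (gale_x w) (gale_y w) i j = coldet (?B(b := w 0)) / coldet ?B"
      using 3 b by (simp add: cross2_def gale_x_def gale_y_def)
    ultimately show ?thesis using 3 b D by (simp add: power_add)
  next
    case 4
    define a where "a = i - 2"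
    define b where "b = j - 2"
    have a: "i = a + 2" and b: "j = b + 2" using 4 ij by (simp_all add: a_def b_def)
    have ab: "a < b" "a < CARD('n)" "b < CARD('n)" "a \<noteq> b" using a b ij by auto
    have minor: "coldet (omit i (omit j w)) = (-1) ^ Suc (a + b) * coldet (?B(a := w 0, b := w 1))"
      using minor_omit_high[of a b w] ab a b by simp
    have "cross2 (gale_x w) (gale_y w) i j * coldet ?B * coldet ?B =
        coldet (?B(a := w 0)) * coldet (?B(b := w 1)) - coldet (?B(b := w 0)) * coldet (?B(a := w 1))"
      using a b D by (simp add: cross2_def gale_x_def gale_y_def field_simps)
    also have "\<dots> = coldet ?B * coldet (?B(a := w 0, b := w 1))"
      using ab D by (intro coldet_two_updates[symmetric]) auto
    finally have "cross2 (gale_x w) (gale_y w) i j * coldet ?B = coldet (?B(a := w 0, b := w 1))"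
      using D by (simp add: mult.commute)
    moreover have "- ((-1::real) ^ (i + j)) = (-1) ^ Suc (a + b)"
      using a b by (simp add: power_add)
    ultimately show ?thesis using minor by simp
  qed
qed

lemma hered_spanning_minor_nonzero:
  fixes w :: "nat \<Rightarrow> real^'n::{finite,linorder}"
  assumes hs: "hered_spanning w" and ij: "i < j" "j \<le> CARD('n) + 1"
  shows "coldet (omit i (omit j w)) \<noteq> 0"
proof -
  let ?I = "{..CARD('n) + 1} - {i, j}"
  have "card ?I = CARD('n)" using ij by (subst card_Diff_subset) auto
  then have "span (w ` ?I) = UNIV" using hs unfolding hered_spanning_def by auto
  moreover have "omit i (omit j w) ` {..<CARD('n)} = w ` ?I"
  proof -
    have "omit i (omit j w) ` {..<CARD('n)} = w ` skip j ` skip i ` {..<CARD('n)}"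
      by (simp add: omit_skip image_image)
    also have "skip i ` {..<CARD('n)} = {..CARD('n)} - {i}" using ij by (intro skip_image) auto
    also have "skip j ` ({..CARD('n)} - {i}) = skip j ` {..<Suc CARD('n)} - {skip j i}"
      by (simp add: image_set_diff[OF inj_skip] lessThan_Suc_atMost)
    also have "skip j i = i" using ij by (simp add: skip_def)
    also have "skip j ` {..<Suc CARD('n)} - {i} = ?I" using ij skip_image[of j "Suc CARD('n)"] by auto
    finally show ?thesis .
  qed
  ultimately show ?thesis by (simp add: coldet_nonzero_iff_span)
qed

section \<open>The coboundary of Sm vanishes\<close>

lemma cofactor_omit:
  fixes w :: "nat \<Rightarrow> real^'n::{finite,linorder}"
  assumes D: "coldet (tail2 w) \<noteq> 0" and i: "i \<le> CARD('n) + 1" and k: "k \<le> CARD('n)"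
  shows "cofactor k (omit i w) =
         (-1) ^ i * cross2 (gale_x w) (gale_y w) i (skip i k) * coldet (tail2 w)"
proof (cases "k < i")
  case True
  have "cofactor k (omit i w) =
      (-1) ^ k * (- ((-1) ^ (k + i)) * cross2 (gale_x w) (gale_y w) k i * coldet (tail2 w))"
    unfolding cofactor_def using minor_eq_cross2[OF D True] i by simp
  also have "\<dots> = (-1) ^ i * cross2 (gale_x w) (gale_y w) i k * coldet (tail2 w)"
    by (simp add: power_add cross2_antisym[of _ _ i k])
  finally show ?thesis using True by (simp add: skip_def)
next
  case False
  have "cofactor k (omit i w) = (-1) ^ k * coldet (omit i (omit (Suc k) w))"
    unfolding cofactor_def using False by (simp add: omit_comm)
  also have "\<dots> = (-1) ^ k *
      (- ((-1) ^ (i + Suc k)) * cross2 (gale_x w) (gale_y w) i (Suc k) * coldet (tail2 w))"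
    using minor_eq_cross2[OF D, of i "Suc k"] False k by simp
  also have "\<dots> = (-1) ^ i * cross2 (gale_x w) (gale_y w) i (Suc k) * coldet (tail2 w)"
    by (simp add: power_add)
  finally show ?thesis using False by (simp add: skip_def)
qed

lemma signed_Sm_omit:
  fixes w :: "nat \<Rightarrow> real^'n::{finite,linorder}"
  assumes ev: "even CARD('n)" and D: "coldet (tail2 w) \<noteq> 0" and i: "i \<le> CARD('n) + 1"
  shows "(-1) ^ i * Sm (omit i w) =
         sgn (coldet (tail2 w)) *
         (\<Prod>j\<in>{..<CARD('n) + 2} - {i}. sgn (cross2 (gale_x w) (gale_y w) i j)) / 2 ^ CARD('n)"
proof -
  let ?s = "(-1) ^ i * sgn (coldet (tail2 w))"
  let ?z = "\<lambda>j. sgn (cross2 (gale_x w) (gale_y w) i j)"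
  have s: "?s * ?s = 1" using D by (auto simp: sgn_real_def algebra_simps simp flip: power_add)
  have "(\<Prod>k\<le>CARD('n). sgn (cofactor k (omit i w))) = (\<Prod>k\<le>CARD('n). ?s * ?z (skip i k))"
  proof (intro prod.cong refl)
    fix k assume "k \<in> {..CARD('n)}"
    moreover have "sgn ((-1::real) ^ i) = (-1) ^ i" by (cases "even i") simp_all
    ultimately show "sgn (cofactor k (omit i w)) = ?s * ?z (skip i k)"
      using cofactor_omit[OF D i] by (simp add: sgn_mult)
  qed
  also have "\<dots> = ?s ^ Suc CARD('n) * (\<Prod>k<Suc CARD('n). ?z (skip i k))"
    by (simp add: prod.distrib lessThan_Suc_atMost)
  also have "?s ^ Suc CARD('n) = ?s" using involution_power_even[OF s ev] by simp
  also have "(\<Prod>k<Suc CARD('n). ?z (skip i k)) = (\<Prod>j\<in>{..Suc CARD('n)} - {i}. ?z j)"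
    using i by (intro prod.reindex_bij_betw bij_skip) simp
  finally have "Sm (omit i w) = ?s * (\<Prod>j\<in>{..<CARD('n) + 2} - {i}. ?z j) / 2 ^ CARD('n)"
    by (simp add: Sm_closed_formula[OF ev] lessThan_Suc_atMost[symmetric])
  moreover have "(-1::real) ^ i * (-1) ^ i = 1" by (simp flip: power_add)
  ultimately show ?thesis by (simp add: mult.assoc[symmetric])
qed

text \<open>By the closed formula, d Sm w is a multiple of the planar sign sum for the M = n + 2
  Gale points of w, which are pairwise independent by hereditary spanning.\<close>
lemma cobdry_Sm_vanishes:
  fixes w :: "nat \<Rightarrow> real^'n::{finite,linorder}"
  assumes ev: "even CARD('n)" and hs: "hered_spanning w"
  shows "cobdry Sm w = 0"
proof -
  let ?D = "coldet (tail2 w)"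
  let ?c = "cross2 (gale_x w) (gale_y w)"
  have D: "?D \<noteq> 0" using hered_spanning_minor_nonzero[OF hs, of 0 1] omit_0_omit_1[of w] by simp
  have indep: "\<forall>i<CARD('n) + 2. \<forall>j<CARD('n) + 2. i \<noteq> j \<longrightarrow> ?c i j \<noteq> 0"
  proof (intro allI impI)
    fix i j assume ij: "i < CARD('n) + 2" "j < CARD('n) + 2" "i \<noteq> j"
    have "?c a b \<noteq> 0" if "a < b" "b \<le> CARD('n) + 1" for a b
      using hered_spanning_minor_nonzero[OF hs that] minor_eq_cross2[OF D that] by auto
    then show "?c i j \<noteq> 0" using ij cross2_antisym[of "gale_x w" "gale_y w" i j]
      by (cases "i < j") auto
  qed
  have "cobdry Sm w = (\<Sum>i<CARD('n) + 2.
      sgn ?D * (\<Prod>j\<in>{..<CARD('n) + 2} - {i}. sgn (?c i j)) / 2 ^ CARD('n))"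
    unfolding cobdry_def using signed_Sm_omit[OF ev D]
    by (intro sum.cong) (auto simp: lessThan_Suc_atMost[symmetric])
  also have "\<dots> = sgn ?D * (\<Sum>i<CARD('n) + 2. \<Prod>j\<in>{..<CARD('n) + 2} - {i}. sgn (?c i j)) / 2 ^ CARD('n)"
    by (simp only: sum_distrib_left sum_divide_distrib)
  also have "(\<Sum>i<CARD('n) + 2. \<Prod>j\<in>{..<CARD('n) + 2} - {i}. sgn (?c i j)) = 0"
    using ev indep by (intro planar_sign_sum) auto
  finally show ?thesis by simp
qed

theorem lemma8p2:
  fixes dummy :: "'n::{finite,linorder}"
  assumes "even CARD('n)"
  shows "(\<forall>(v::nat \<Rightarrow> real^'n::{finite,linorder}) (c::nat \<Rightarrow> real).
            (\<forall>i\<le>CARD('n). v i \<noteq> 0 \<and> c i \<noteq> 0) \<longrightarrow>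
            Sm (\<lambda>i. c i *\<^sub>R v i) = Sm v)
       \<and> (\<forall>(v::nat \<Rightarrow> real^'n::{finite,linorder}) (g::real^'n::{finite,linorder}^'n::{finite,linorder}).
            invertible g \<longrightarrow> Sm (\<lambda>i. g *v v i) = sgn (det g) * Sm v)
       \<and> (\<forall>w::nat \<Rightarrow> real^'n::{finite,linorder}. hered_spanning w \<longrightarrow> cobdry Sm w = 0)"
  using Sm_rescale[OF assms] Sm_equivariant[OF assms] cobdry_Sm_vanishes[OF assms] by blast

end
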